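(* Let $\Omega\subset\mathbb{R}^2$ be the unit disc, let $r_1,r_2\in(0,1)$ and $\sigma_1,\sigma_2>0$, and suppose that for every integer $n$ $$\det\begin{pmatrix}D_{1,0}(r_1,r_2)&\sigma_1I_n'(r_1/\sqrt{\sigma_1})&D_{1,1}(r_1,r_2)\\ I_n(r_2/\sqrt{\sigma_2})&0&\sigma_2I_n'(r_2/\sqrt{\sigma_2})\\ D(r_1,r_2)&I_n(r_1/\sqrt{\sigma_1})&D_{0,1}(r_1,r_2)\end{pmatrix}=0,$$ where $D$ and $D_{r,s}$ are taken with order $\nu=n$. Then $R_{\sigma_1,r_1}(g)=R_{\sigma_2,r_2}(g)$ for every $g\in H^{-1/2}(\partial\Omega)$.
   Context: $I_\nu,K_\nu$ are the modified Bessel functions of first and second kind of order $\nu$. For order $\nu$, $D(x,y)=I_\nu(x)K_\nu(y)-K_\nu(x)I_\nu(y)$ and $D_{r,s}(x,y)=\partial_x^r\partial_y^sD(x,y)$. Polar coordinates $(r,\phi)$; $g_n=(g,e^{in\phi})$. For $\rho\in(0,1)$ (core radius), $\sigma>0$, $g\in H^{-1/2}(\partial\Omega)$, let $\psi$ solve $\frac{1}{r}\partial_r(r\partial_r\psi)+\frac{1}{r^2}\partial_\phi^2\psi-\sigma^{-1}\psi=0$ for $0<r<\rho$; $\frac{1}{r}\partial_r(r\partial_r\psi)+\frac{1}{r^2}\partial_\phi^2\psi-\psi=0$ for $\rho<r<1$; $\psi|_{r=\rho}^+=\psi|_{r=\rho}^-$, $\partial_r\psi|_{r=\rho}^+=\sigma\,\partial_r\psi|_{r=\rho}^-$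 ($\pm$ = limits from outside/inside); $\partial_r\psi|_{r=1}=g$; $\psi$ bounded at $r=0$. The Neumann-to-Dirichlet map is $R_{\sigma,\rho}(g)=\psi|_{r=1}$; explicitly $R_{\sigma,\rho}(g)=\sum_{n\in\mathbb{Z}}\frac{I_n(\rho/\sqrt{\sigma})D_{0,1}(1,\rho)-\sigma I_n'(\rho/\sqrt{\sigma})D(1,\rho)}{I_n(\rho/\sqrt{\sigma})D_{1,1}(1,\rho)-\sigma I_n'(\rho/\sqrt{\sigma})D_{1,0}(1,\rho)}g_ne^{in\phi}$ (with $\nu=n$ in $D$). *)

theory Defs
  imports "HOL-Analysis.Analysis"
begin

definition besselI :: "int \<Rightarrow> real \<Rightarrow> real" where
  "besselI n x = (\<Sum>k. (x / 2) ^ (2 * k + nat \<bar>n\<bar>) / (fact k * fact (k + nat \<bar>n\<bar>)))"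

definition besselK :: "int \<Rightarrow> real \<Rightarrow> real" where
  "besselK n x = integral {0..} (\<lambda>t. exp (- x * cosh t) * cosh (real_of_int n * t))"

definition besselD :: "int \<Rightarrow> real \<Rightarrow> real \<Rightarrow> real" where
  "besselD n x y = besselI n x * besselK n y - besselK n x * besselI n y"

definition besselD10 :: "int \<Rightarrow> real \<Rightarrow> real \<Rightarrow> real" where
  "besselD10 n x y = deriv (\<lambda>s. besselD n s y) x"

definition besselD01 :: "int \<Rightarrow> real \<Rightarrow> real \<Rightarrow> real" where
  "besselD01 n x y = deriv (\<lambda>t. besselD n x t) y"

definition besselD11 :: "int \<Rightarrow> real \<Rightarrow> real \<Rightarrow> real" where
  "besselD11 n x y = deriv (\<lambda>s. deriv (\<lambda>t. besselD n s t) y) x"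

definition det3 :: "real \<Rightarrow> real \<Rightarrow> real \<Rightarrow> real \<Rightarrow> real \<Rightarrow> real \<Rightarrow> real \<Rightarrow> real \<Rightarrow> real \<Rightarrow> real" where
  "det3 a b c d e f g h i = a * (e * i - f * h) - b * (d * i - f * g) + c * (d * h - e * g)"

text \<open>Fourier multiplier of the Neumann-to-Dirichlet map R_{sigma,rho} on mode n.\<close>
definition ntd_mult :: "real \<Rightarrow> real \<Rightarrow> int \<Rightarrow> real" where
  "ntd_mult \<sigma> \<rho> n =
     (besselI n (\<rho> / sqrt \<sigma>) * besselD01 n 1 \<rho> - \<sigma> * deriv (besselI n) (\<rho> / sqrt \<sigma>) * besselD n 1 \<rho>) /
     (besselI n (\<rho> / sqrt \<sigma>) * besselD11 n 1 \<rho> - \<sigma> * deriv (besselI n) (\<rho> / sqrt \<sigma>) * besselD10 n 1 \<rho>)"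

text \<open>Elements of H^{-1/2} of the unit circle, represented by their Fourier coefficient
  sequences g_n = (g, e^{in phi}), n in Z.\<close>
definition H_minus_half :: "(int \<Rightarrow> complex) set" where
  "H_minus_half = {g. (\<lambda>n. (cmod (g n))\<^sup>2 / sqrt (1 + (real_of_int n)\<^sup>2)) summable_on UNIV}"

definition NtD :: "real \<Rightarrow> real \<Rightarrow> (int \<Rightarrow> complex) \<Rightarrow> (int \<Rightarrow> complex)" where
  "NtD \<sigma> \<rho> g = (\<lambda>n. complex_of_real (ntd_mult \<sigma> \<rho> n) * g n)"

end

theory Submission
  imports Defs
begin

(* Matching the core solution I_n(r / sqrt sigma) at r = rho with an exterior solution
   alpha I_n + beta K_n shows that the n-th multiplier of R_{sigma,rho} is a fractional
   linear function of the ratio W_I : W_K of two Wronskian-type quantities of the core data.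
   Expanding the determinant gives exactly
     W_I(sigma1,r1) W_K(sigma2,r2) - W_K(sigma1,r1) W_I(sigma2,r2),
   so its vanishing makes the two ratios, and hence the multipliers, equal, provided W_K does
   not vanish.  That follows from I_n > 0, I_n' >= 0, K_n >= 0 and K_n' < 0 on (0, oo); the
   last one needs differentiation under the integral sign in the integral representation of
   K_n, justified by a second-order remainder bound with an integrable majorant. *)

lemma has_real_derivative_integral_param:
  fixes F :: "real \<Rightarrow> real \<Rightarrow> real" and S :: "real set"
  assumes "0 < \<delta>"
    and F: "\<And>y. \<bar>y - x\<bar> < \<delta> \<Longrightarrow> F y integrable_on S"
    and G: "G integrable_on S" and B: "B integrable_on S"
    and remainder: "\<And>y t. \<bar>y - x\<bar> < \<delta> \<Longrightarrow> t \<in> S \<Longrightarrow>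
      \<bar>F y t - F x t - (y - x) * G t\<bar> \<le> (y - x)\<^sup>2 * B t"
  shows "((\<lambda>y. integral S (F y)) has_real_derivative integral S G) (at x)"
proof -
  have bound: "\<bar>integral S (F y) - integral S (F x) - (y - x) * integral S G\<bar>
      \<le> (y - x)\<^sup>2 * integral S B" if y: "\<bar>y - x\<bar> < \<delta>" for y
  proof -
    have Fx: "F x integrable_on S" using F \<open>0 < \<delta>\<close> by simp
    have "integral S (F y) - integral S (F x) - (y - x) * integral S G
        = integral S (\<lambda>t. F y t - F x t - (y - x) * G t)"
      using F[OF y] Fx G
      by (simp add: integral_diff integrable_diff integrable_on_mult_right)
    also have "norm \<dots> \<le> integral S (\<lambda>t. (y - x)\<^sup>2 * B t)"
      using F[OF y] Fx G B remainder[OF y]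
      by (intro integral_norm_bound_integral integrable_diff integrable_on_mult_right) auto
    finally show ?thesis by simp
  qed
  have "\<forall>\<^sub>F y in at x. norm ((integral S (F y) - integral S (F x)) / (y - x) - integral S G)
      \<le> \<bar>y - x\<bar> * integral S B"
    unfolding eventually_at
  proof (intro exI[of _ \<delta>] conjI ballI impI allI)
    fix y assume "y \<noteq> x \<and> dist y x < \<delta>"
    then have "y - x \<noteq> 0" "\<bar>y - x\<bar> < \<delta>" by (auto simp: dist_real_def)
    then show "norm ((integral S (F y) - integral S (F x)) / (y - x) - integral S G)
      \<le> \<bar>y - x\<bar> * integral S B"
      using bound[of y]
      by (simp add: field_simps divide_le_eq power2_eq_square abs_mult)
  qed (fact \<open>0 < \<delta>\<close>)
  moreover have "((\<lambda>y. \<bar>y - x\<bar> * integral S B) \<longlongrightarrow> 0) (at x)"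
    by (intro tendsto_eq_intros) auto
  ultimately have
    "((\<lambda>y. (integral S (F y) - integral S (F x)) / (y - x) - integral S G) \<longlongrightarrow> 0) (at x)"
    by (rule Lim_null_comparison)
  then show ?thesis
    by (simp add: has_field_derivative_iff LIM_zero_iff)
qed

lemma abs_exp_minus_one_minus_le: "\<bar>exp u - 1 - u\<bar> \<le> u\<^sup>2 / 2 * exp \<bar>u\<bar>" for u :: real
proof -
  obtain t where t: "\<bar>t\<bar> \<le> \<bar>u\<bar>" "exp u = (\<Sum>m<2. u ^ m / fact m) + exp t / fact 2 * u ^ 2"
    using Maclaurin_exp_le[of u 2] by blast
  then have "\<bar>exp u - 1 - u\<bar> = u\<^sup>2 / 2 * exp t"
    by (simp add: eval_nat_numeral)
  also have "\<dots> \<le> u\<^sup>2 / 2 * exp \<bar>u\<bar>"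
    using t(1) by (intro mult_left_mono) auto
  finally show ?thesis .
qed

lemma exp_mult_second_order_bound:
  fixes x h c :: real
  assumes "\<bar>h\<bar> \<le> x / 2" and "0 \<le> c"
  shows "\<bar>exp (- (x + h) * c) - exp (- x * c) + h * c * exp (- x * c)\<bar>
    \<le> h\<^sup>2 / 2 * c\<^sup>2 * exp (- (x / 2) * c)"
proof -
  have "exp (- (x + h) * c) - exp (- x * c) + h * c * exp (- x * c)
      = exp (- x * c) * (exp (- h * c) - 1 - (- h * c))"
    by (simp add: algebra_simps flip: exp_add)
  then have "\<bar>exp (- (x + h) * c) - exp (- x * c) + h * c * exp (- x * c)\<bar>
      = exp (- x * c) * \<bar>exp (- h * c) - 1 - (- h * c)\<bar>"
    by (simp add: abs_mult)
  also have "\<dots> \<le> exp (- x * c) * ((- h * c)\<^sup>2 / 2 * exp \<bar>- h * c\<bar>)"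
    by (intro mult_left_mono abs_exp_minus_one_minus_le) auto
  also have "\<dots> \<le> exp (- x * c) * ((- h * c)\<^sup>2 / 2 * exp (x / 2 * c))"
    using mult_right_mono[OF assms] \<open>0 \<le> c\<close> by (intro mult_left_mono) (auto simp: abs_mult)
  also have "\<dots> = h\<^sup>2 / 2 * c\<^sup>2 * exp (- (x / 2) * c)"
    by (simp add: algebra_simps flip: exp_add)
  finally show ?thesis .
qed

lemma power_div_fact_le_exp: "0 \<le> x \<Longrightarrow> x ^ N / fact N \<le> exp x" for x :: real
  using sum_le_suminf[OF summable_exp_generic[of x], of "{N}"]
  by (simp add: exp_def divide_inverse ac_simps)

lemma cosh_le_exp_abs: "cosh t \<le> exp \<bar>t\<bar>" for t :: real
  by (simp add: cosh_def abs_if)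

lemma exp_neg_cosh_le:
  fixes a t :: real
  assumes "0 < a"
  shows "exp (- a * cosh t) \<le> fact N * (2 / a) ^ N * exp (- real N * t)"
proof -
  have "(a / 2 * exp t) ^ N / fact N \<le> exp (a / 2 * exp t)"
    using assms by (intro power_div_fact_le_exp) auto
  also have "\<dots> \<le> exp (a * cosh t)"
    using assms by (simp add: cosh_def field_simps)
  finally have "exp (- a * cosh t) \<le> fact N / (a / 2 * exp t) ^ N"
    using assms by (simp add: exp_minus field_simps)
  also have "\<dots> = fact N * (2 / a) ^ N * exp (- real N * t)"
    by (simp add: exp_minus field_simps flip: exp_of_nat_mult)
  finally show ?thesis .
qed

lemma besselK_integrand_le:
  fixes a t :: real and k :: nat and n :: int
  assumes "0 < a" and "0 \<le> t"
  defines "N \<equiv> k + nat \<bar>n\<bar> + 1"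
  shows "cosh t ^ k * cosh (of_int n * t) * exp (- a * cosh t) \<le> fact N * (2 / a) ^ N * exp (- t)"
proof -
  have "cosh t ^ k \<le> exp t ^ k"
    using cosh_le_exp_abs[of t] \<open>0 \<le> t\<close>
    by (intro power_mono) auto
  then have "cosh t ^ k \<le> exp (real k * t)"
    by (simp add: exp_of_nat_mult)
  moreover have "cosh (of_int n * t) \<le> exp (real (nat \<bar>n\<bar>) * t)"
    using cosh_le_exp_abs[of "of_int n * t"] \<open>0 \<le> t\<close> by (simp add: abs_mult)
  moreover have "exp (- a * cosh t) \<le> fact N * (2 / a) ^ N * exp (- real N * t)"
    using \<open>0 < a\<close> by (rule exp_neg_cosh_le)
  ultimately have "cosh t ^ k * cosh (of_int n * t) * exp (- a * cosh t)
      \<le> exp (real k * t) * exp (real (nat \<bar>n\<bar>) * t) * (fact N * (2 / a) ^ N * exp (- real N * t))"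
    by (intro mult_mono) auto
  also have "\<dots> = fact N * (2 / a) ^ N * exp (- t)"
    by (simp add: N_def algebra_simps flip: exp_add)
  finally show ?thesis .
qed

lemma integrable_besselK_integrand:
  fixes a :: real
  assumes "0 < a"
  shows "(\<lambda>t. cosh t ^ k * cosh (of_int n * t) * exp (- a * cosh t)) integrable_on {0..}"
proof (rule measurable_bounded_by_integrable_imp_integrable)
  let ?N = "k + nat \<bar>n\<bar> + 1"
  show "(\<lambda>t. fact ?N * (2 / a) ^ ?N * exp (- t)) integrable_on {0::real..}"
    using integrable_on_exp_minus_to_infinity[of 1 0] by (intro integrable_on_mult_right) simp
  show "norm (cosh t ^ k * cosh (of_int n * t) * exp (- a * cosh t)) \<le> fact ?N * (2 / a) ^ ?N * exp (- t)"
    if "t \<in> {0..}" for t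
    using besselK_integrand_le[OF assms, of t k n] that
    by (simp add: abs_mult)
  show "(\<lambda>t. cosh t ^ k * cosh (of_int n * t) * exp (- a * cosh t)) \<in> borel_measurable (lebesgue_on {0..})"
    by (intro continuous_imp_measurable_on_sets_lebesgue continuous_intros) auto
qed auto

lemma has_real_derivative_besselK:
  assumes "0 < x"
  shows "(besselK n has_real_derivative
    - integral {0..} (\<lambda>t. cosh t * cosh (of_int n * t) * exp (- x * cosh t))) (at x)"
proof -
  let ?F = "\<lambda>y t. exp (- y * cosh t) * cosh (of_int n * t)"
  let ?G = "\<lambda>t. - (cosh t * cosh (of_int n * t) * exp (- x * cosh t))"
  let ?B = "\<lambda>t. cosh t ^ 2 * cosh (of_int n * t) * exp (- (x / 2) * cosh t) / 2"
  have "((\<lambda>y. integral {0..} (?F y)) has_real_derivative integral {0..} ?G) (at x)"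
  proof (rule has_real_derivative_integral_param[where \<delta> = "x / 2"])
    show "?F y integrable_on {0..}" if "\<bar>y - x\<bar> < x / 2" for y
    proof -
      have "0 < y"
        using that by linarith
      then show ?thesis
        using integrable_besselK_integrand[of y 0 n] by (simp add: mult.commute)
    qed
    show "?G integrable_on {0..}" "?B integrable_on {0..}"
      using integrable_besselK_integrand[of x 1 n] integrable_besselK_integrand[of "x / 2" 2 n] assms
      by (auto intro: integrable_neg integrable_on_divide)
    show "\<bar>?F y t - ?F x t - (y - x) * ?G t\<bar> \<le> (y - x)\<^sup>2 * ?B t"
      if "\<bar>y - x\<bar> < x / 2" for y t
    proof -
      have "?F y t - ?F x t - (y - x) * ?G t = cosh (of_int n * t) *
          (exp (- (x + (y - x)) * cosh t) - exp (- x * cosh t) + (y - x) * cosh t * exp (- x * cosh t))"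
        by (simp add: algebra_simps)
      then have "\<bar>?F y t - ?F x t - (y - x) * ?G t\<bar> = cosh (of_int n * t) *
          \<bar>exp (- (x + (y - x)) * cosh t) - exp (- x * cosh t) + (y - x) * cosh t * exp (- x * cosh t)\<bar>"
        by (simp add: abs_mult)
      also have "\<dots> \<le> cosh (of_int n * t) * ((y - x)\<^sup>2 / 2 * (cosh t)\<^sup>2 * exp (- (x / 2) * cosh t))"
        using that by (intro mult_left_mono exp_mult_second_order_bound) auto
      finally show ?thesis by (simp add: algebra_simps)
    qed
  qed (use assms in simp)
  then show ?thesis
    by (simp add: besselK_def[abs_def])
qed

lemma has_real_derivative_deriv_besselK:
  "0 < x \<Longrightarrow> (besselK n has_real_derivative deriv (besselK n) x) (at x)"
  using DERIV_imp_deriv[OF has_real_derivative_besselK] has_real_derivative_besselK by simp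

lemma besselK_nonneg: "0 < x \<Longrightarrow> 0 \<le> besselK n x"
  using integrable_besselK_integrand[of x 0 n] unfolding besselK_def
  by (intro integral_nonneg) (auto simp: mult.commute)

lemma deriv_besselK_neg:
  assumes "0 < x"
  shows "deriv (besselK n) x < 0"
proof -
  define G where "G = (\<lambda>t. cosh t * cosh (of_int n * t) * exp (- x * cosh t))"
  have G_ge: "exp (- x * cosh 1) \<le> G t" if "t \<in> {0..1}" for t
  proof -
    have "exp (- x * cosh 1) \<le> exp (- x * cosh t)"
      using that assms by (simp add: cosh_real_nonneg_le_iff)
    moreover have "1 * 1 \<le> cosh t * cosh (of_int n * t)"
      by (intro mult_mono cosh_real_ge_1) auto
    ultimately have "exp (- x * cosh 1) * 1 \<le> exp (- x * cosh t) * (cosh t * cosh (of_int n * t))"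
      by (intro mult_mono) auto
    then show ?thesis
      by (simp add: G_def mult_ac)
  qed
  have G_int: "G integrable_on {0..1}"
    unfolding G_def by (intro integrable_continuous_interval continuous_intros)
  have "0 < exp (- x * cosh 1)"
    by simp
  also have "\<dots> = integral {0..1} (\<lambda>t::real. exp (- x * cosh 1))"
    by simp
  also have "\<dots> \<le> integral {0..1} G"
    using G_int G_ge by (intro integral_le) auto
  also have "\<dots> \<le> integral {0..} G"
    using G_int integrable_besselK_integrand[OF assms, of 1 n]
    by (intro integral_subset_le) (auto simp: G_def)
  finally show ?thesis
    using DERIV_imp_deriv[OF has_real_derivative_besselK[OF assms]] by (simp add: G_def)
qed

definition besselI_coeff :: "nat \<Rightarrow> nat \<Rightarrow> real" where
  "besselI_coeff m k = 1 / (fact k * fact (k + m))"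

definition besselI_series :: "nat \<Rightarrow> real \<Rightarrow> real" where
  "besselI_series m y = (\<Sum>k. besselI_coeff m k * y ^ k)"

lemma besselI_coeff_pos: "0 < besselI_coeff m k"
  by (simp add: besselI_coeff_def)

lemma summable_besselI_series: "summable (\<lambda>k. besselI_coeff m k * y ^ k)"
proof (rule summable_comparison_test'[OF summable_exp[of "\<bar>y\<bar>"]])
  fix k
  have "besselI_coeff m k \<le> inverse (fact k)"
    by (simp add: besselI_coeff_def divide_simps)
  then show "norm (besselI_coeff m k * y ^ k) \<le> inverse (fact k) * \<bar>y\<bar> ^ k"
    using besselI_coeff_pos[of m k] by (simp add: abs_mult power_abs mult_right_mono)
qed

lemma has_real_derivative_besselI_series:
  "(besselI_series m has_real_derivative (\<Sum>k. diffs (besselI_coeff m) k * y ^ k)) (at y)"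
  unfolding besselI_series_def[abs_def]
  by (rule termdiffs_strong_converges_everywhere[OF summable_besselI_series])

lemma besselI_series_pos: "0 \<le> y \<Longrightarrow> 0 < besselI_series m y"
  unfolding besselI_series_def
  by (rule suminf_pos2[OF summable_besselI_series, of _ _ 0])
    (auto intro: mult_nonneg_nonneg less_imp_le[OF besselI_coeff_pos] besselI_coeff_pos)

lemma deriv_besselI_series_nonneg: "0 \<le> y \<Longrightarrow> 0 \<le> deriv (besselI_series m) y"
  unfolding DERIV_imp_deriv[OF has_real_derivative_besselI_series]
  by (rule suminf_nonneg[OF termdiff_converges_all[OF summable_besselI_series]])
    (auto simp: diffs_def intro!: mult_nonneg_nonneg less_imp_le[OF besselI_coeff_pos])

lemma besselI_eq_series: "besselI n x = (x / 2) ^ nat \<bar>n\<bar> * besselI_series (nat \<bar>n\<bar>) ((x / 2)\<^sup>2)"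
proof -
  define m where "m = nat \<bar>n\<bar>"
  have "besselI n x = (\<Sum>k. (x / 2) ^ m * (besselI_coeff m k * ((x / 2)\<^sup>2) ^ k))"
    unfolding besselI_def m_def[symmetric]
    by (intro suminf_cong) (simp add: besselI_coeff_def power_add power_mult[symmetric] mult.commute)
  also have "\<dots> = (x / 2) ^ m * besselI_series m ((x / 2)\<^sup>2)"
    unfolding besselI_series_def by (rule suminf_mult[OF summable_besselI_series])
  finally show ?thesis
    by (simp add: m_def)
qed

lemma besselI_pos: "0 < x \<Longrightarrow> 0 < besselI n x"
  unfolding besselI_eq_series by (intro mult_pos_pos besselI_series_pos) auto

lemma has_real_derivative_besselI:
  fixes n :: int
  defines "m \<equiv> nat \<bar>n\<bar>"
  shows "(besselI n has_real_derivative
    real m * (x / 2) ^ (m - 1) / 2 * besselI_series m ((x / 2)\<^sup>2)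
    + (x / 2) ^ m * deriv (besselI_series m) ((x / 2)\<^sup>2) * (x / 2)) (at x)"
proof -
  have eq: "besselI n = (\<lambda>x. (x / 2) ^ m * besselI_series m ((x / 2)\<^sup>2))"
    using besselI_eq_series m_def by auto
  have "((\<lambda>x. (x / 2)\<^sup>2) has_real_derivative x / 2) (at x)"
    by (rule derivative_eq_intros refl | simp)+
  then have series: "((\<lambda>x. besselI_series m ((x / 2)\<^sup>2)) has_real_derivative
      deriv (besselI_series m) ((x / 2)\<^sup>2) * (x / 2)) (at x)"
    unfolding DERIV_imp_deriv[OF has_real_derivative_besselI_series]
    by (rule DERIV_chain2[OF has_real_derivative_besselI_series])
  have power: "((\<lambda>x. (x / 2) ^ m) has_real_derivative real m * (x / 2) ^ (m - 1) / 2) (at x)"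
    by (rule derivative_eq_intros refl | simp)+
  show ?thesis
    unfolding eq by (rule DERIV_cong[OF DERIV_mult[OF power series]]) (simp add: algebra_simps)
qed

lemma has_real_derivative_deriv_besselI: "(besselI n has_real_derivative deriv (besselI n) x) (at x)"
  using has_real_derivative_besselI DERIV_imp_deriv by metis

lemma deriv_besselI_nonneg: "0 \<le> x \<Longrightarrow> 0 \<le> deriv (besselI n) x"
  unfolding DERIV_imp_deriv[OF has_real_derivative_besselI]
  by (intro add_nonneg_nonneg mult_nonneg_nonneg besselI_series_pos[THEN less_imp_le]
      deriv_besselI_series_nonneg) auto

lemma besselD10_eq:
  "0 < x \<Longrightarrow> besselD10 n x y = deriv (besselI n) x * besselK n y - deriv (besselK n) x * besselI n y"
  unfolding besselD10_def besselD_def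
  by (rule DERIV_imp_deriv)
    (rule derivative_eq_intros has_real_derivative_deriv_besselI has_real_derivative_deriv_besselK refl
      | assumption | simp)+

lemma besselD01_eq:
  "0 < y \<Longrightarrow> besselD01 n x y = besselI n x * deriv (besselK n) y - besselK n x * deriv (besselI n) y"
  unfolding besselD01_def besselD_def
  by (rule DERIV_imp_deriv)
    (rule derivative_eq_intros has_real_derivative_deriv_besselI has_real_derivative_deriv_besselK refl
      | assumption | simp)+

lemma besselD11_eq:
  assumes "0 < x" and "0 < y"
  shows "besselD11 n x y =
    deriv (besselI n) x * deriv (besselK n) y - deriv (besselK n) x * deriv (besselI n) y"
proof -
  have "(\<lambda>s. deriv (besselD n s) y) =
      (\<lambda>s. besselI n s * deriv (besselK n) y - besselK n s * deriv (besselI n) y)"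
    using besselD01_eq[OF \<open>0 < y\<close>] by (auto simp: besselD01_def)
  then show ?thesis
    unfolding besselD11_def
    by (simp, intro DERIV_imp_deriv)
      (rule derivative_eq_intros has_real_derivative_deriv_besselI has_real_derivative_deriv_besselK
        \<open>0 < x\<close> refl | simp)+
qed

(* (I_n(rho / sqrt sigma), sigma I_n'(rho / sqrt sigma)) are the Cauchy data the core imposes at
   r = rho; these are their Wronskians with I_n and K_n. *)
definition core_wronskian_I :: "real \<Rightarrow> real \<Rightarrow> int \<Rightarrow> real" where
  "core_wronskian_I \<sigma> \<rho> n =
     besselI n (\<rho> / sqrt \<sigma>) * deriv (besselI n) \<rho>
     - \<sigma> * deriv (besselI n) (\<rho> / sqrt \<sigma>) * besselI n \<rho>"

definition core_wronskian_K :: "real \<Rightarrow> real \<Rightarrow> int \<Rightarrow> real" where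
  "core_wronskian_K \<sigma> \<rho> n =
     besselI n (\<rho> / sqrt \<sigma>) * deriv (besselK n) \<rho>
     - \<sigma> * deriv (besselI n) (\<rho> / sqrt \<sigma>) * besselK n \<rho>"

lemma ntd_mult_eq_core_wronskians:
  assumes "0 < \<rho>"
  shows "ntd_mult \<sigma> \<rho> n =
    (besselI n 1 * core_wronskian_K \<sigma> \<rho> n - besselK n 1 * core_wronskian_I \<sigma> \<rho> n) /
    (deriv (besselI n) 1 * core_wronskian_K \<sigma> \<rho> n - deriv (besselK n) 1 * core_wronskian_I \<sigma> \<rho> n)"
  unfolding ntd_mult_def core_wronskian_I_def core_wronskian_K_def besselD_def
    besselD01_eq[OF assms] besselD11_eq[OF zero_less_one assms] besselD10_eq[OF zero_less_one]
  by (simp add: algebra_simps)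

lemma core_wronskian_K_neg:
  assumes "0 < \<rho>" and "0 < \<sigma>"
  shows "core_wronskian_K \<sigma> \<rho> n < 0"
proof -
  have "0 < \<rho> / sqrt \<sigma>"
    using assms by simp
  then have "besselI n (\<rho> / sqrt \<sigma>) * deriv (besselK n) \<rho> < 0"
    and "0 \<le> \<sigma> * deriv (besselI n) (\<rho> / sqrt \<sigma>) * besselK n \<rho>"
    using assms besselI_pos deriv_besselK_neg deriv_besselI_nonneg besselK_nonneg
    by (auto intro: mult_pos_neg mult_nonneg_nonneg)
  then show ?thesis
    unfolding core_wronskian_K_def by linarith
qed

lemma det3_eq_core_wronskians:
  assumes "0 < r1" and "0 < r2"
  shows "det3
    (besselD10 n r1 r2) (\<sigma>1 * deriv (besselI n) (r1 / sqrt \<sigma>1)) (besselD11 n r1 r2)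
    (besselI n (r2 / sqrt \<sigma>2)) 0 (\<sigma>2 * deriv (besselI n) (r2 / sqrt \<sigma>2))
    (besselD n r1 r2) (besselI n (r1 / sqrt \<sigma>1)) (besselD01 n r1 r2)
   = core_wronskian_I \<sigma>1 r1 n * core_wronskian_K \<sigma>2 r2 n
     - core_wronskian_K \<sigma>1 r1 n * core_wronskian_I \<sigma>2 r2 n"
  unfolding det3_def core_wronskian_I_def core_wronskian_K_def besselD_def
    besselD10_eq[OF assms(1)] besselD01_eq[OF assms(2)] besselD11_eq[OF assms]
  by (simp add: algebra_simps)

lemma combination_ratio_eq_if_proportional:
  fixes a b c d p1 q1 p2 q2 :: real
  assumes "q1 \<noteq> 0" and "q2 \<noteq> 0" and "p1 * q2 = q1 * p2"
  shows "(a * q1 - b * p1) / (c * q1 - d * p1) = (a * q2 - b * p2) / (c * q2 - d * p2)"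
proof -
  define t where "t = q1 / q2"
  have "t \<noteq> 0" and "q1 = t * q2" and "p1 = t * p2"
    using assms by (auto simp: t_def field_simps)
  then show ?thesis
    by (simp add: mult.left_commute[of _ t] flip: right_diff_distrib)
qed

theorem theorem2p3:
  fixes r1 r2 \<sigma>1 \<sigma>2 :: real
  assumes "0 < r1" "r1 < 1" "0 < r2" "r2 < 1" "0 < \<sigma>1" "0 < \<sigma>2"
    and "\<forall>n::int. det3
           (besselD10 n r1 r2) (\<sigma>1 * deriv (besselI n) (r1 / sqrt \<sigma>1)) (besselD11 n r1 r2)
           (besselI n (r2 / sqrt \<sigma>2)) 0 (\<sigma>2 * deriv (besselI n) (r2 / sqrt \<sigma>2))
           (besselD n r1 r2) (besselI n (r1 / sqrt \<sigma>1)) (besselD01 n r1 r2) = 0"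
  shows "\<forall>g \<in> H_minus_half. NtD \<sigma>1 r1 g = NtD \<sigma>2 r2 g"
proof -
  have "ntd_mult \<sigma>1 r1 n = ntd_mult \<sigma>2 r2 n" for n
  proof -
    have "core_wronskian_I \<sigma>1 r1 n * core_wronskian_K \<sigma>2 r2 n
        = core_wronskian_K \<sigma>1 r1 n * core_wronskian_I \<sigma>2 r2 n"
      using assms(7) det3_eq_core_wronskians[OF assms(1,3)] by simp
    then show ?thesis
      unfolding ntd_mult_eq_core_wronskians[OF assms(1)] ntd_mult_eq_core_wronskians[OF assms(3)]
      by (rule combination_ratio_eq_if_proportional[OF
          core_wronskian_K_neg[OF assms(1,5), THEN less_imp_neq]
          core_wronskian_K_neg[OF assms(3,6), THEN less_imp_neq]])
  qed
  then show ?thesis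
    by (simp add: NtD_def)
qed

end
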